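(* Let $k$ be an odd positive integer. Then $$-\frac{3}{8k^3}\sum_{n=1}^{k-1}\cot\!\Big(\frac{2\pi n}{k}\Big)\cot\!\Big(\frac{\pi n}{k}\Big)\csc^2\!\Big(\frac{\pi n}{k}\Big)=-\frac{(k^2-1)(k^2-19)}{240k^3}.$$ *)

theory Defs
  imports "HOL-Analysis.Analysis"
begin

end

theory Submission
  imports Defs "HOL-Computational_Algebra.Polynomial"
begin

text \<open>
  Write \<open>k = 2m + 1\<close> and \<open>S\<^sub>j\<close> for the sum of \<open>cot\<^sup>j(\<pi>n/k)\<close> over \<open>n = 1..m\<close>.
  The summand at \<open>y = \<pi>n/k\<close> equals \<open>(cot\<^sup>4 y - 1)/2\<close> and is invariant under
  \<open>n \<mapsto> k - n\<close>, so the sum is \<open>S\<^sub>4 - m\<close>.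
  Expanding \<open>sin (k y) = Im (cos y (1 + i tan y))\<^sup>k\<close> shows that the \<open>m\<close> distinct numbers
  \<open>tan\<^sup>2(\<pi>n/k)\<close> are roots of \<open>P(z) = \<Sum>\<^sub>l (-1)\<^sup>l C(k, 2l+1) z\<^sup>l\<close>, a polynomial of degree
  at most \<open>m\<close> with \<open>P(0) = k\<close>. Hence \<open>P(z) = k \<Prod>\<^sub>n (1 - cot\<^sup>2(\<pi>n/k) z)\<close>, and comparing
  the coefficients of \<open>z\<close> and \<open>z\<^sup>2\<close> gives \<open>S\<^sub>2 = C(k,3)/k\<close> and \<open>S\<^sub>2\<^sup>2 - S\<^sub>4 = 2 C(k,5)/k\<close>.
\<close>

lemma Im_one_plus_i_times_power:
  fixes t :: real
  shows "Im ((1 + \<i> * of_real t) ^ (2*m+1)) =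
           (\<Sum>l\<le>m. (-1)^l * real ((2*m+1) choose (2*l+1)) * t ^ (2*l+1))"
proof -
  have "(1 + \<i> * of_real t) ^ n = (\<Sum>j\<le>n. (real (n choose j) * t ^ j) *\<^sub>R \<i> ^ j)" for n
    by (subst add.commute, subst binomial_ring) (simp add: power_mult_distrib scaleR_conv_of_real mult_ac)
  moreover have atMost_eq_lessThan: "{..2*m+1} = {..<2*(m+1)}" by auto
  ultimately have "Im ((1 + \<i> * of_real t) ^ (2*m+1)) =
          (\<Sum>j<2*(m+1). real ((2*m+1) choose j) * t ^ j * Im (\<i> ^ j))"
    by (simp only: Im_sum scaleR_complex.sel atMost_eq_lessThan)
  also have "\<dots> = (\<Sum>l<m+1. real ((2*m+1) choose (2*l+1)) * t ^ (2*l+1) * (-1)^l)"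
  proof -
    define g where "g j = real ((2*m+1) choose j) * t ^ j * (-1) ^ (j div 2)" for j
    have "Im (\<i> ^ j) = (if even j then 0 else (-1) ^ (j div 2))" for j :: nat
      by (cases "even j") (auto elim!: evenE oddE simp: power_mult)
    then have "(\<Sum>j<2*(m+1). real ((2*m+1) choose j) * t ^ j * Im (\<i> ^ j))
             = (\<Sum>j<2*(m+1). if even j then 0 else g j)"
      by (intro sum.cong) (simp_all add: g_def)
    also have "\<dots> = (\<Sum>l<m+1. g (2*l+1))"
      by (simp only: sum_split_even_odd sum.neutral_const add_0)
    finally show ?thesis
      by (simp add: g_def)
  qed
  finally show ?thesis
    by (simp add: lessThan_Suc_atMost mult_ac)
qed

lemma sin_odd_multiple_tan_expansion:
  fixes x :: real
  assumes "cos x \<noteq> 0"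
  shows "sin (real (2*m+1) * x) =
           cos x ^ (2*m+1) * (\<Sum>l\<le>m. (-1)^l * real ((2*m+1) choose (2*l+1)) * tan x ^ (2*l+1))"
proof -
  have "cis x = of_real (cos x) * (1 + \<i> * of_real (tan x))"
    using assms by (simp add: complex_eq_iff tan_def)
  then have "cis x ^ (2*m+1) = cos x ^ (2*m+1) *\<^sub>R (1 + \<i> * of_real (tan x)) ^ (2*m+1)"
    by (simp only: power_mult_distrib of_real_power scaleR_conv_of_real)
  then have "sin (real (2*m+1) * x) = cos x ^ (2*m+1) * Im ((1 + \<i> * of_real (tan x)) ^ (2*m+1))"
    by (simp only: sin_n_Im_cis_pow_n scaleR_complex.sel)
  then show ?thesis
    by (simp only: Im_one_plus_i_times_power)
qed

lemma coeff_prod_one_minus_linear: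
  fixes r :: "'b \<Rightarrow> 'a::comm_ring_1"
  assumes "finite S"
  shows "coeff (\<Prod>i\<in>S. [:1, - r i:]) 0 = 1"
    and "coeff (\<Prod>i\<in>S. [:1, - r i:]) 1 = - (\<Sum>i\<in>S. r i)"
    and "2 * coeff (\<Prod>i\<in>S. [:1, - r i:]) 2 = (\<Sum>i\<in>S. r i)^2 - (\<Sum>i\<in>S. r i ^ 2)"
  using assms
proof (induction S rule: finite_induct)
  case empty
  case 1 show ?case by simp
  case 2 show ?case by simp
  case 3 show ?case by simp
next
  case (insert x F)
  case 1 show ?case using insert by (simp add: coeff_mult_0)
  case 2 show ?case using insert by (simp add: coeff_mult_0)
  case 3 show ?case using insert by (simp add: coeff_mult_0 numeral_2_eq_2 power2_eq_square algebra_simps)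
qed

definition tan_sq_poly :: "nat \<Rightarrow> real poly" where
  "tan_sq_poly m = (\<Sum>l\<le>m. monom ((-1)^l * real ((2*m+1) choose (2*l+1))) l)"

lemma coeff_tan_sq_poly: "coeff (tan_sq_poly m) l = (-1)^l * real ((2*m+1) choose (2*l+1))"
  by (simp add: tan_sq_poly_def coeff_sum binomial_eq_0)

lemma degree_tan_sq_poly_le: "degree (tan_sq_poly m) \<le> m"
  by (rule degree_le) (simp add: coeff_tan_sq_poly binomial_eq_0)

lemma poly_tan_sq_poly:
  "poly (tan_sq_poly m) z = (\<Sum>l\<le>m. (-1)^l * real ((2*m+1) choose (2*l+1)) * z ^ l)"
  by (simp add: tan_sq_poly_def poly_sum poly_monom)

lemma sin_odd_multiple_eq_tan_sq_poly:
  fixes x :: real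
  assumes "cos x \<noteq> 0"
  shows "sin (real (2*m+1) * x) = cos x ^ (2*m+1) * tan x * poly (tan_sq_poly m) (tan x ^ 2)"
proof -
  have "tan x * poly (tan_sq_poly m) (tan x ^ 2) =
          (\<Sum>l\<le>m. (-1)^l * real ((2*m+1) choose (2*l+1)) * tan x ^ (2*l+1))"
    unfolding poly_tan_sq_poly sum_distrib_left
    by (rule sum.cong) (simp_all add: power_mult)
  then show ?thesis
    by (simp only: sin_odd_multiple_tan_expansion[OF assms] mult.assoc)
qed

lemma odd_fraction_of_pi_bounds:
  assumes "n \<in> {1..m}"
  shows "0 < pi * real n / real (2*m+1)" and "pi * real n / real (2*m+1) < pi / 2"
proof -
  show "0 < pi * real n / real (2*m+1)"
    using assms by simp
  have "2 * real n < real (2*m+1)"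
    using assms by simp
  from mult_strict_left_mono[OF this pi_gt_zero]
  show "pi * real n / real (2*m+1) < pi / 2"
    by (simp add: field_simps)
qed

lemma tan_sq_poly_factorization:
  "tan_sq_poly m = smult (real (2*m+1)) (\<Prod>n\<in>{1..m}. [:1, - (cot (pi * real n / real (2*m+1)) ^ 2):])"
    (is "_ = ?P")
proof -
  define \<theta> where "\<theta> n = pi * real n / real (2*m+1)" for n
  have \<theta>: "0 < \<theta> n" "\<theta> n < pi / 2" if "n \<in> {1..m}" for n
    using odd_fraction_of_pi_bounds[OF that] by (simp_all add: \<theta>_def)
  have tan_pos: "tan (\<theta> n) > 0" if "n \<in> {1..m}" for n
    using \<theta>[OF that] by (rule tan_gt_zero)
  have "strict_mono_on {1..m} (\<lambda>n. tan (\<theta> n) ^ 2)"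
  proof (rule strict_mono_onI)
    fix a b assume ab: "a \<in> {1..m}" "b \<in> {1..m}" "a < b"
    then have "\<theta> a < \<theta> b"
      by (simp add: \<theta>_def divide_strict_right_mono)
    then have "tan (\<theta> a) < tan (\<theta> b)"
      using \<theta>[OF ab(1)] \<theta>[OF ab(2)] by (simp add: tan_mono_lt_eq)
    then show "tan (\<theta> a) ^ 2 < tan (\<theta> b) ^ 2"
      using tan_pos[OF ab(1)] by (simp add: power_strict_mono)
  qed
  then have "card ((\<lambda>n. tan (\<theta> n) ^ 2) ` {1..m}) = m"
    by (simp add: card_image strict_mono_on_imp_inj_on)
  moreover have "0 \<notin> (\<lambda>n. tan (\<theta> n) ^ 2) ` {1..m}"
    using tan_pos by fastforce
  ultimately have card_nodes: "card (insert 0 ((\<lambda>n. tan (\<theta> n) ^ 2) ` {1..m})) = m + 1"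
    by simp
  text \<open>Both sides have degree at most \<open>m\<close> and agree at the \<open>m + 1\<close> points \<open>0\<close> and \<open>tan\<^sup>2(\<theta> n)\<close>.\<close>
  have "degree ?P \<le> (\<Sum>n\<in>{1..m}. degree [:1, - (cot (\<theta> n) ^ 2):])"
    using degree_prod_sum_le[of "{1..m}" "\<lambda>n. [:1, - (cot (\<theta> n) ^ 2):]"]
    by (simp add: \<theta>_def o_def)
  also have "\<dots> \<le> m"
    using sum_mono[of "{1..m}" "\<lambda>n. degree [:1, - (cot (\<theta> n) ^ 2):]" "\<lambda>_. 1"] by simp
  finally have "degree ?P \<le> m" .
  show ?thesis
  proof (rule poly_eqI_degree)
    fix y assume "y \<in> insert 0 ((\<lambda>n. tan (\<theta> n) ^ 2) ` {1..m})"
    then consider "y = 0" | n where "n \<in> {1..m}" "y = tan (\<theta> n) ^ 2"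
      by blast
    then show "poly (tan_sq_poly m) y = poly ?P y"
    proof cases
      case 1
      have "poly (tan_sq_poly m) 0 = real (2*m+1)"
        by (simp add: poly_0_coeff_0 coeff_tan_sq_poly)
      moreover have "poly ?P 0 = real (2*m+1)"
        by (simp add: poly_prod)
      ultimately show ?thesis
        using 1 by simp
    next
      case 2
      have cos: "cos (\<theta> n) > 0"
        using \<theta>[OF 2(1)] by (intro cos_gt_zero_pi) auto
      have "sin (real (2*m+1) * \<theta> n) = 0"
        by (simp add: \<theta>_def sin_zero_iff_int2)
      then have "poly (tan_sq_poly m) y = 0"
        using sin_odd_multiple_eq_tan_sq_poly[of "\<theta> n" m] cos tan_pos[OF 2(1)] 2(2) by simp
      moreover have "poly [:1, - (cot (\<theta> n) ^ 2):] y = 0"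
        using tan_pos[OF 2(1)] 2(2) by (simp add: cot_altdef field_simps)
      then have "poly ?P y = 0"
        using 2(1) by (force simp: poly_prod \<theta>_def)
      ultimately show ?thesis
        by simp
    qed
  qed (use card_nodes degree_tan_sq_poly_le[of m] \<open>degree ?P \<le> m\<close> in auto)
qed

lemma real_choose_three: "real (n choose 3) = real n * (real n - 1) * (real n - 2) / 6"
  by (simp add: binomial_gbinomial gbinomial_prod_rev numeral_eq_Suc prod.atLeast0_lessThan_Suc)

lemma real_choose_five:
  "real (n choose 5) = real n * (real n - 1) * (real n - 2) * (real n - 3) * (real n - 4) / 120"
  by (simp add: binomial_gbinomial gbinomial_prod_rev numeral_eq_Suc prod.atLeast0_lessThan_Suc)

lemma sum_cot_sq_odd_fraction_of_pi:
  "(\<Sum>n=1..m. cot (pi * real n / real (2*m+1)) ^ 2) = real m * (2 * real m - 1) / 3"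
proof -
  have "coeff (tan_sq_poly m) 1 = - (real (2*m+1) * (\<Sum>n=1..m. cot (pi * real n / real (2*m+1)) ^ 2))"
    by (simp only: tan_sq_poly_factorization coeff_smult mult_minus_right finite_atLeastAtMost
          coeff_prod_one_minus_linear(2)[of "{1..m}" "\<lambda>n. cot (pi * real n / real (2*m+1)) ^ 2"])
  moreover have "coeff (tan_sq_poly m) 1 = - real ((2*m+1) choose 3)"
    using coeff_tan_sq_poly[of m 1] by simp
  ultimately have "real (2*m+1) * (\<Sum>n=1..m. cot (pi * real n / real (2*m+1)) ^ 2) = real ((2*m+1) choose 3)"
    by linarith
  also have "real ((2*m+1) choose 3) = real (2*m+1) * (real m * (2 * real m - 1) / 3)"
    by (simp add: real_choose_three field_simps)
  finally show ?thesis
    by (rule mult_left_cancel[THEN iffD1, rotated]) simp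
qed

lemma sum_cot_pow4_odd_fraction_of_pi:
  "(\<Sum>n=1..m. cot (pi * real n / real (2*m+1)) ^ 4) =
     real m * (2 * real m - 1) * (4 * real m ^ 2 + 10 * real m - 9) / 45"
proof -
  define r where "r n = cot (pi * real n / real (2*m+1)) ^ 2" for n
  have "2 * coeff (tan_sq_poly m) 2 = real (2*m+1) * ((\<Sum>n=1..m. r n)^2 - (\<Sum>n=1..m. r n ^ 2))"
    unfolding tan_sq_poly_factorization coeff_smult r_def
    by (simp only: mult.left_commute[of 2] coeff_prod_one_minus_linear(3) finite_atLeastAtMost)
  then have "(\<Sum>n=1..m. r n ^ 2) = (\<Sum>n=1..m. r n)^2 - 2 * real ((2*m+1) choose 5) / real (2*m+1)"
    by (simp add: coeff_tan_sq_poly field_simps)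
  also have "(\<Sum>n=1..m. r n) = real m * (2 * real m - 1) / 3"
    unfolding r_def by (rule sum_cot_sq_odd_fraction_of_pi)
  also have "(real m * (2 * real m - 1) / 3)^2 - 2 * real ((2*m+1) choose 5) / real (2*m+1) =
               real m * (2 * real m - 1) * (4 * real m ^ 2 + 10 * real m - 9) / 45"
    by (simp add: real_choose_five field_simps power2_eq_square)
  finally show ?thesis
    by (simp add: r_def flip: power_mult)
qed

lemma cot_double_mult_cot_csc_sq:
  fixes y :: real
  assumes "sin y \<noteq> 0" and "cos y \<noteq> 0"
  shows "cot (2 * y) * cot y * (1 / sin y) ^ 2 = (cot y ^ 4 - 1) / 2"
proof -
  have "cot (2 * y) * cot y = (cot y ^ 2 - 1) / 2"
    unfolding cot_def sin_double cos_double using assms by (simp add: field_simps power2_eq_square)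
  moreover have "(1 / sin y) ^ 2 = 1 + cot y ^ 2"
    using assms sin_cos_squared_add[of y] by (simp add: cot_def field_simps)
  ultimately have "cot (2 * y) * cot y * (1 / sin y) ^ 2 = (cot y ^ 2 - 1) / 2 * (1 + cot y ^ 2)"
    by simp
  also have "\<dots> = (cot y ^ 4 - 1) / 2"
    by (simp add: field_simps power2_eq_square power4_eq_xxxx)
  finally show ?thesis .
qed

lemma cot_double_mult_cot_csc_sq_reflect:
  fixes y :: real
  shows "cot (2 * (pi - y)) * cot (pi - y) * (1 / sin (pi - y)) ^ 2 = cot (2 * y) * cot y * (1 / sin y) ^ 2"
  by (simp add: cot_def right_diff_distrib sin_diff cos_diff)

lemma sum_atLeastAtMost_reflect:
  fixes f :: "nat \<Rightarrow> 'a::comm_semiring_1"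
  assumes "\<And>n. n \<in> {1..m} \<Longrightarrow> f (2*m+1-n) = f n"
  shows "(\<Sum>n=1..2*m. f n) = 2 * (\<Sum>n=1..m. f n)"
proof -
  have "{1..2*m} = {1..m} \<union> {m+1..2*m}"
    by auto
  then have "(\<Sum>n=1..2*m. f n) = (\<Sum>n=1..m. f n) + (\<Sum>n=m+1..2*m. f n)"
    by (simp add: sum.union_disjoint)
  also have "(\<Sum>n=m+1..2*m. f n) = (\<Sum>n=1..m. f (2*m+1-n))"
    by (rule sum.reindex_bij_witness[of _ "\<lambda>n. 2*m+1-n" "\<lambda>n. 2*m+1-n"]) auto
  also have "\<dots> = (\<Sum>n=1..m. f n)"
    using assms by (rule sum.cong[OF refl])
  finally show ?thesis
    by (simp add: mult_2)
qed

lemma sum_cot_double_mult_cot_csc_sq_odd_fraction_of_pi: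
  "(\<Sum>n=1..2*m. cot (2 * (pi * real n / real (2*m+1))) * cot (pi * real n / real (2*m+1))
       * (1 / sin (pi * real n / real (2*m+1))) ^ 2) =
     (real (2*m+1) ^ 2 - 1) * (real (2*m+1) ^ 2 - 19) / 90"
proof -
  define F where "F y = cot (2 * y) * cot y * (1 / sin y) ^ 2" for y :: real
  define \<theta> where "\<theta> n = pi * real n / real (2*m+1)" for n
  have "(\<Sum>n=1..2*m. F (\<theta> n)) = 2 * (\<Sum>n=1..m. F (\<theta> n))"
  proof (rule sum_atLeastAtMost_reflect)
    fix n assume "n \<in> {1..m}"
    then have "\<theta> (2*m+1-n) = pi - \<theta> n"
      by (simp add: \<theta>_def field_simps)
    then show "F (\<theta> (2*m+1-n)) = F (\<theta> n)"
      unfolding F_def by (simp only: cot_double_mult_cot_csc_sq_reflect)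
  qed
  also have "(\<Sum>n=1..m. F (\<theta> n)) = (\<Sum>n=1..m. (cot (\<theta> n) ^ 4 - 1) / 2)"
  proof (rule sum.cong[OF refl])
    fix n assume "n \<in> {1..m}"
    then have "0 < \<theta> n" "\<theta> n < pi / 2"
      unfolding \<theta>_def by (rule odd_fraction_of_pi_bounds)+
    then have "sin (\<theta> n) > 0" "cos (\<theta> n) > 0"
      by (simp_all add: sin_gt_zero cos_gt_zero)
    then show "F (\<theta> n) = (cot (\<theta> n) ^ 4 - 1) / 2"
      unfolding F_def by (intro cot_double_mult_cot_csc_sq) simp_all
  qed
  also have "2 * \<dots> = (\<Sum>n=1..m. cot (\<theta> n) ^ 4) - real m"
    by (simp add: sum_divide_distrib[symmetric] sum_subtractf)
  also have "\<dots> = real m * (2 * real m - 1) * (4 * real m ^ 2 + 10 * real m - 9) / 45 - real m"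
    unfolding \<theta>_def by (simp only: sum_cot_pow4_odd_fraction_of_pi)
  also have "\<dots> = (real (2*m+1) ^ 2 - 1) * (real (2*m+1) ^ 2 - 19) / 90"
    by (simp add: field_simps power2_eq_square)
  finally show ?thesis
    by (simp only: F_def \<theta>_def)
qed

theorem mainTheorem7:
  fixes k :: nat
  assumes "odd k" and "k > 0"
  shows "- 3 / (8 * real k ^ 3) *
           (\<Sum>n = 1..k - 1. cot (2 * pi * real n / real k) * cot (pi * real n / real k)
              * (1 / sin (pi * real n / real k)) ^ 2)
         = - ((real k ^ 2 - 1) * (real k ^ 2 - 19)) / (240 * real k ^ 3)"
proof -
  obtain m where k: "k = 2*m+1"
    using assms(1) by (auto elim: oddE)
  have "(\<Sum>n = 1..k - 1. cot (2 * pi * real n / real k) * cot (pi * real n / real k)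
           * (1 / sin (pi * real n / real k)) ^ 2) = (real k ^ 2 - 1) * (real k ^ 2 - 19) / 90"
    using sum_cot_double_mult_cot_csc_sq_odd_fraction_of_pi[of m]
    by (simp only: k add_diff_cancel_right' times_divide_eq_right mult.assoc)
  then show ?thesis
    using assms(2) by (simp add: field_simps)
qed

end
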